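(* Let $(E,d)$ be a Polish space and $\mu\in(0,1)$. For any $f\in D^{\mu}([0,1],E)$, \[ [f]_{\wedge\mu}\le[f]_{\mu}\le 2[f]_{\sim\mu}\le\frac{2}{1-2^{-\mu}}[f]_{\wedge\mu}. \]
   Context: $D([0,1],E)$ is the space of càdlàg $E$-valued functions on $[0,1]$. For $0\le s\le t\le u\le 1$, $\Delta(f;s,t,u)=d(f(s),f(t))\wedge d(f(t),f(u))$, and $[f]_\mu=\sup_{0\le s\le t\le u\le 1}\frac{\Delta(f;s,t,u)}{|u-s|^\mu}$. $D^{\mu}([0,1],E)$ is the set of $f\in D([0,1],E)$ with $[f]_\mu+\sup_{t\in(0,1]}\frac{d(f(0),f(t))}{t^\mu}+\sup_{t\in[0,1)}\frac{d(f(1),f(t))}{|1-t|^\mu}<\infty$. For $0\le\sigma<\tau\le1$, $N(f;(\sigma,\tau))=\inf_{\sigma<\theta\le\tau}\sup_{s\in[\sigma,\theta),\,u\in[\theta,\tau]}\left[d(f(\sigma),f(s))\vee d(f(u),f(\tau))\right]$; for $\eta>0$, $N(f;\eta)=\sup_{0\le\sigma<\tau\le 1,\ \tau-\sigma\le\eta}N(f;(\sigma,\tau))$; $[f]_{\sim\mu}=\sup_{\eta>0}\frac{N(f;\eta)}{\eta^\mu}$. Finally $[f]_{\wedge\mu}=\sup_{0<s<u\le 1}\frac{\Delta\left(f;s,\frac{s+u}{2},u\right)}{|u-s|^{\mu}}$. *)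

theory Defs
  imports "HOL-Analysis.Analysis"
begin

text \<open>Cadlag functions on [0,1]: right-continuous on [0,1), left limits on (0,1].
  Only the values on [0,1] are relevant.\<close>
definition cadlag :: "(real \<Rightarrow> 'a::metric_space) \<Rightarrow> bool" where
  "cadlag f \<longleftrightarrow> (\<forall>t\<in>{0..<1}. continuous (at_right t) f) \<and>
                  (\<forall>t\<in>{0<..1}. \<exists>l. (f \<longlongrightarrow> l) (at_left t))"

definition Delta :: "(real \<Rightarrow> 'a::metric_space) \<Rightarrow> real \<Rightarrow> real \<Rightarrow> real \<Rightarrow> real" where
  "Delta f s t u = min (dist (f s) (f t)) (dist (f t) (f u))"

definition holder_semi :: "real \<Rightarrow> (real \<Rightarrow> 'a::metric_space) \<Rightarrow> ereal" where
  "holder_semi \<mu> f = (SUP (s,t,u)\<in>{(s,t,u). 0 \<le> s \<and> s \<le> t \<and> t \<le> u \<and> u \<le> 1 \<and> s < u}.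
      ereal (Delta f s t u / (u - s) powr \<mu>))"

definition holder_D :: "real \<Rightarrow> (real \<Rightarrow> 'a::metric_space) set" where
  "holder_D \<mu> = {f. cadlag f \<and> holder_semi \<mu> f < \<infinity>
      \<and> (SUP t\<in>{0<..1}. ereal (dist (f 0) (f t) / t powr \<mu>)) < \<infinity>
      \<and> (SUP t\<in>{0..<1}. ereal (dist (f 1) (f t) / \<bar>1 - t\<bar> powr \<mu>)) < \<infinity>}"

definition Nint :: "(real \<Rightarrow> 'a::metric_space) \<Rightarrow> real \<Rightarrow> real \<Rightarrow> ereal" where
  "Nint f \<sigma> \<tau> = (INF \<theta>\<in>{\<sigma><..\<tau>}. SUP (s,u)\<in>{\<sigma>..<\<theta>} \<times> {\<theta>..\<tau>}.
      ereal (max (dist (f \<sigma>) (f s)) (dist (f u) (f \<tau>))))"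

definition Neta :: "(real \<Rightarrow> 'a::metric_space) \<Rightarrow> real \<Rightarrow> ereal" where
  "Neta f \<eta> = (SUP (\<sigma>,\<tau>)\<in>{(\<sigma>,\<tau>). 0 \<le> \<sigma> \<and> \<sigma> < \<tau> \<and> \<tau> \<le> 1 \<and> \<tau> - \<sigma> \<le> \<eta>}. Nint f \<sigma> \<tau>)"

definition tilde_semi :: "real \<Rightarrow> (real \<Rightarrow> 'a::metric_space) \<Rightarrow> ereal" where
  "tilde_semi \<mu> f = (SUP \<eta>\<in>{0<..}. Neta f \<eta> / ereal (\<eta> powr \<mu>))"

definition wedge_semi :: "real \<Rightarrow> (real \<Rightarrow> 'a::metric_space) \<Rightarrow> ereal" where
  "wedge_semi \<mu> f = (SUP (s,u)\<in>{(s,u). 0 < s \<and> s < u \<and> u \<le> 1}.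
      ereal (Delta f s ((s + u) / 2) u / (u - s) powr \<mu>))"

end

theory Submission
  imports Defs
begin

(* The comparisons $[f]_{\wedge\mu} \le [f]_\mu \le [f]_{\sim\mu}$ are between suprema: the
   midpoint triple is one of the triples of $[f]_\mu$, and for every $\theta \in (s,u]$ the point $t$
   lies in $[s,\theta)$ or in $[\theta,u]$, so $\Delta(f;s,t,u) \le N(f;(s,u))$.

   For the last inequality let $\Delta(f;a,\frac{a+b}{2},b) \le w (b-a)^\mu$ on all subintervals of
   $[\sigma,\tau]$ and $S(l) = w l^\mu / (1 - 2^{-\mu})$, so that $S(l) = w l^\mu + S(l/2)$.
   Bisect $[\sigma,\tau]$, keeping the right half if $f$ moves by at most $w l^\mu$ across the left
   half and the left half otherwise (then $f$ moves by at most $w l^\mu$ across the right half).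
   The endpoints $a_n, b_n$ stay within $S(\tau-\sigma) - S(b_n-a_n)$ of $f(\sigma)$ resp. $f(\tau)$.
   Each discarded half has both endpoints close to one value, and bisecting towards any of its
   points, together with right-continuity, keeps the whole half within $S(\tau-\sigma)$ of it.
   The nested intervals shrink to a $\theta$ witnessing $N(f;(\sigma,\tau)) \le S(\tau-\sigma)$. *)

lemma wedge_semi_le_holder_semi: "wedge_semi \<mu> f \<le> holder_semi \<mu> f"
  unfolding wedge_semi_def holder_semi_def
proof (rule SUP_least, clarify)
  fix s u :: real assume "0 < s" "s < u" "u \<le> 1"
  then show "ereal (Delta f s ((s + u) / 2) u / (u - s) powr \<mu>)
      \<le> (SUP (s, t, u)\<in>{(s, t, u). 0 \<le> s \<and> s \<le> t \<and> t \<le> u \<and> u \<le> 1 \<and> s < u}.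
           ereal (Delta f s t u / (u - s) powr \<mu>))"
    by (intro SUP_upper2[of "(s, (s + u) / 2, u)"]) auto
qed

lemma Delta_nonneg: "0 \<le> Delta f s t u"
  by (simp add: Delta_def)

lemma holder_semi_nonneg: "0 \<le> holder_semi \<mu> f"
  unfolding holder_semi_def by (rule SUP_upper2[of "(0, 0, 1)"]) (auto simp: Delta_nonneg)

lemma wedge_semi_nonneg: "0 \<le> wedge_semi \<mu> f"
  unfolding wedge_semi_def by (rule SUP_upper2[of "(1/2, 1)"]) (auto simp: Delta_nonneg)

lemma Delta_le_Nint:
  assumes "s \<le> t" "t \<le> u"
  shows "ereal (Delta f s t u) \<le> Nint f s u"
  unfolding Nint_def
proof (rule INF_greatest)
  fix \<theta> assume \<theta>: "\<theta> \<in> {s<..u}"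
  show "ereal (Delta f s t u)
      \<le> (SUP (s', u')\<in>{s..<\<theta>} \<times> {\<theta>..u}. ereal (max (dist (f s) (f s')) (dist (f u') (f u))))"
  proof (cases "t < \<theta>")
    case True
    with assms \<theta> show ?thesis by (intro SUP_upper2[of "(t, u)"]) (auto simp: Delta_def)
  next
    case False
    with assms \<theta> show ?thesis by (intro SUP_upper2[of "(s, t)"]) (auto simp: Delta_def)
  qed
qed

lemma holder_semi_le_tilde_semi: "holder_semi \<mu> f \<le> tilde_semi \<mu> f"
  unfolding holder_semi_def
proof (rule SUP_least, clarify)
  fix s t u :: real assume stu: "0 \<le> s" "s \<le> t" "t \<le> u" "u \<le> 1" "s < u"
  have len: "0 < (u - s) powr \<mu>" using stu by simp
  have "ereal (Delta f s t u) \<le> Nint f s u"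
    using stu by (intro Delta_le_Nint)
  also have "\<dots> \<le> Neta f (u - s)"
    unfolding Neta_def using stu by (intro SUP_upper2[of "(s, u)"]) auto
  finally have "ereal (Delta f s t u) / ereal ((u - s) powr \<mu>)
      \<le> Neta f (u - s) / ereal ((u - s) powr \<mu>)"
    using len by (intro ereal_divide_right_mono) auto
  also have "\<dots> \<le> tilde_semi \<mu> f"
    unfolding tilde_semi_def using stu by (intro SUP_upper2[of "u - s"]) auto
  finally show "ereal (Delta f s t u / (u - s) powr \<mu>) \<le> tilde_semi \<mu> f"
    using len by simp
qed

lemma Nint_le:
  assumes "\<sigma> < \<theta>" "\<theta> \<le> \<tau>"
    and "\<And>s. \<sigma> \<le> s \<Longrightarrow> s < \<theta> \<Longrightarrow> dist (f \<sigma>) (f s) \<le> K"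
    and "\<And>u. \<theta> \<le> u \<Longrightarrow> u \<le> \<tau> \<Longrightarrow> dist (f u) (f \<tau>) \<le> K"
  shows "Nint f \<sigma> \<tau> \<le> ereal K"
  unfolding Nint_def
  by (rule INF_lower2[of \<theta>]) (use assms in \<open>auto intro!: SUP_least\<close>)

lemma Nint_le_right_cont:
  fixes f :: "real \<Rightarrow> 'a::metric_space"
  assumes "\<sigma> < \<tau>" "continuous (at_right \<sigma>) f" "0 \<le> K"
    and right: "\<And>u. \<sigma> < u \<Longrightarrow> u \<le> \<tau> \<Longrightarrow> dist (f u) (f \<tau>) \<le> K"
  shows "Nint f \<sigma> \<tau> \<le> ereal K"
proof (rule ereal_le_epsilon2)
  fix e :: real assume "0 < e"
  with assms(2) obtain b where "\<sigma> < b" and b: "\<And>y. \<sigma> < y \<Longrightarrow> y < b \<Longrightarrow> dist (f y) (f \<sigma>) < e"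
    by (auto simp: continuous_within tendsto_iff eventually_at_right_field)
  have "Nint f \<sigma> \<tau> \<le> ereal (K + e)"
  proof (rule Nint_le[of \<sigma> "min \<tau> b"])
    show "dist (f \<sigma>) (f s) \<le> K + e" if "\<sigma> \<le> s" "s < min \<tau> b" for s
      using that b[of s] \<open>0 \<le> K\<close> \<open>0 < e\<close> by (cases "s = \<sigma>") (auto simp: dist_commute)
    show "dist (f u) (f \<tau>) \<le> K + e" if "min \<tau> b \<le> u" "u \<le> \<tau>" for u
      using that right[of u] \<open>\<sigma> < b\<close> assms(1) \<open>0 < e\<close> by (auto simp: min_le_iff_disj)
  qed (use \<open>\<sigma> < b\<close> assms(1) in auto)
  then show "Nint f \<sigma> \<tau> \<le> ereal K + ereal e"
    by simp
qed

lemma dist_le_of_right_approach: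
  fixes f :: "real \<Rightarrow> 'a::metric_space"
  assumes "continuous (at_right x) f"
    and "\<And>d. 0 < d \<Longrightarrow> \<exists>y. x < y \<and> y < x + d \<and> dist (f y) z \<le> K"
  shows "dist (f x) z \<le> K"
proof (rule ccontr)
  assume "\<not> dist (f x) z \<le> K"
  then have "eventually (\<lambda>y. dist (f y) (f x) < dist (f x) z - K) (at_right x)"
    using assms(1) by (auto simp: continuous_within tendsto_iff)
  then obtain b where "x < b" and b: "\<And>y. x < y \<Longrightarrow> y < b \<Longrightarrow> dist (f y) (f x) < dist (f x) z - K"
    by (auto simp: eventually_at_right_field)
  then obtain y where "x < y" "y < b" "dist (f y) z \<le> K"
    using assms(2)[of "b - x"] by auto
  with b have "dist (f x) z < dist (f x) z"
    using dist_triangle3[of "f x" z "f y"] by fastforce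
  then show False by simp
qed

(* $S(l) = \sum_{k \ge 0} w (l/2^k)^\mu$ *)
definition dyadic_sum :: "real \<Rightarrow> real \<Rightarrow> real \<Rightarrow> real" where
  "dyadic_sum \<mu> w l = w * l powr \<mu> / (1 - 2 powr (- \<mu>))"

lemma two_powr_neg_less_one: "0 < \<mu> \<Longrightarrow> 2 powr (- \<mu>) < (1::real)"
  by (simp add: powr_minus_divide)

lemma dyadic_sum_nonneg: "0 < \<mu> \<Longrightarrow> 0 \<le> w \<Longrightarrow> 0 \<le> dyadic_sum \<mu> w l"
  unfolding dyadic_sum_def using two_powr_neg_less_one[of \<mu>] by simp

lemma dyadic_sum_mono:
  "0 < \<mu> \<Longrightarrow> 0 \<le> w \<Longrightarrow> 0 \<le> l \<Longrightarrow> l \<le> l' \<Longrightarrow> dyadic_sum \<mu> w l \<le> dyadic_sum \<mu> w l'"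
  unfolding dyadic_sum_def using two_powr_neg_less_one[of \<mu>]
  by (intro divide_right_mono mult_left_mono powr_mono2) auto

lemma dyadic_sum_half:
  assumes "0 < \<mu>" "0 \<le> l"
  shows "dyadic_sum \<mu> w l = w * l powr \<mu> + dyadic_sum \<mu> w (l / 2)"
proof -
  define p where "p = (2::real) powr \<mu>"
  have "1 < p"
    unfolding p_def using assms by simp
  moreover have neg: "2 powr (- \<mu>) = 1 / p" and half: "(l / 2) powr \<mu> = l powr \<mu> / p"
    unfolding p_def using assms by (simp_all add: powr_minus_divide powr_divide)
  ultimately show ?thesis
    unfolding dyadic_sum_def neg half by (simp add: field_simps)
qed

locale midpoint_bounded =
  fixes f :: "real \<Rightarrow> 'a::metric_space" and \<mu> w \<sigma> \<tau> :: real
  assumes interval: "\<sigma> < \<tau>"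
    and right_cont: "\<And>t. \<sigma> \<le> t \<Longrightarrow> t < \<tau> \<Longrightarrow> continuous (at_right t) f"
    and midpoint: "\<And>a b. \<sigma> \<le> a \<Longrightarrow> a < b \<Longrightarrow> b \<le> \<tau> \<Longrightarrow> Delta f a ((a + b) / 2) b \<le> w * (b - a) powr \<mu>"
    and exponent_pos: "0 < \<mu>"
begin

abbreviation S :: "real \<Rightarrow> real" where
  "S \<equiv> dyadic_sum \<mu> w"

lemma bound_nonneg: "0 \<le> w"
proof -
  have "0 \<le> w * (\<tau> - \<sigma>) powr \<mu>"
    using midpoint[of \<sigma> \<tau>] interval Delta_nonneg[of f] by (meson order.refl order.trans)
  then show ?thesis
    using interval by (simp add: zero_le_mult_iff)
qed

lemma S_nonneg: "0 \<le> S l"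
  using dyadic_sum_nonneg[OF exponent_pos bound_nonneg] .

lemma S_mono: "0 \<le> l \<Longrightarrow> l \<le> l' \<Longrightarrow> S l \<le> S l'"
  using dyadic_sum_mono[OF exponent_pos bound_nonneg] .

lemma dist_midpoint_le:
  assumes "\<sigma> \<le> a" "a < b" "b \<le> \<tau>" "dist (f a) z \<le> c" "dist (f b) z \<le> c"
  shows "dist (f ((a + b) / 2)) z \<le> c + w * (b - a) powr \<mu>"
proof -
  have "min (dist (f a) (f ((a + b) / 2))) (dist (f ((a + b) / 2)) (f b)) \<le> w * (b - a) powr \<mu>"
    using midpoint[OF assms(1-3)] by (simp add: Delta_def)
  then show ?thesis
    using assms(4,5) dist_triangle[of "f ((a + b) / 2)" z "f a"] dist_triangle[of "f ((a + b) / 2)" z "f b"]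
    by (auto simp: dist_commute min_def split: if_splits)
qed

lemma exists_close_point_right:
  assumes "\<sigma> \<le> a" "a < b" "b \<le> \<tau>" "dist (f a) z \<le> c" "dist (f b) z \<le> c" "a \<le> x" "x < b"
  shows "\<exists>y. x < y \<and> y \<le> x + (b - a) / 2 ^ n \<and> dist (f y) z \<le> c + S (b - a)"
  using assms
proof (induction n arbitrary: a b c)
  case 0
  then show ?case
    using S_nonneg[of "b - a"] by (intro exI[of _ b]) auto
next
  case (Suc n)
  define m where "m = (a + b) / 2"
  define c' where "c' = c + w * (b - a) powr \<mu>"
  have m: "a < m" "m < b" "m - a = (b - a) / 2" "b - m = (b - a) / 2"
    using Suc.prems unfolding m_def by (simp_all add: field_simps)
  have "dist (f m) z \<le> c'" and "c \<le> c'"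
    using dist_midpoint_le Suc.prems bound_nonneg unfolding m_def c'_def by auto
  moreover have "c' + S ((b - a) / 2) = c + S (b - a)"
    using dyadic_sum_half[OF exponent_pos, of "b - a"] Suc.prems unfolding c'_def by simp
  ultimately show ?case
    using Suc.IH[of a m c'] Suc.IH[of m b c'] Suc.prems m
    by (cases "x < m") (auto simp: field_simps)
qed

lemma dist_le_on_interval:
  assumes "\<sigma> \<le> a" "a < b" "b \<le> \<tau>" "dist (f a) z \<le> c" "dist (f b) z \<le> c" "a \<le> x" "x \<le> b"
  shows "dist (f x) z \<le> c + S (b - a)"
proof (cases "x = b")
  case True
  then show ?thesis
    using assms(5) S_nonneg[of "b - a"] by simp
next
  case False
  show ?thesis
  proof (rule dist_le_of_right_approach)
    show "continuous (at_right x) f"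
      using False assms by (intro right_cont) auto
    fix d :: real assume "0 < d"
    then have "eventually (\<lambda>n. (b - a) / 2 ^ n < d) sequentially"
      using order_tendstoD(2)[OF LIMSEQ_divide_realpow_zero[of 2 "b - a"]] by simp
    then obtain n where "(b - a) / 2 ^ n < d"
      by (auto simp: eventually_sequentially)
    with exists_close_point_right[of a b z c x n] False assms
    show "\<exists>y. x < y \<and> y < x + d \<and> dist (f y) z \<le> c + S (b - a)"
      by fastforce
  qed
qed

primrec bisect :: "nat \<Rightarrow> real \<times> real" where
  "bisect 0 = (\<sigma>, \<tau>)"
| "bisect (Suc n) = (case bisect n of (a, b) \<Rightarrow>
     if dist (f a) (f ((a + b) / 2)) \<le> w * (b - a) powr \<mu> then ((a + b) / 2, b) else (a, (a + b) / 2))"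

lemma bisect_interval:
  assumes "bisect n = (a, b)"
  shows "\<sigma> \<le> a \<and> a < b \<and> b \<le> \<tau> \<and> b - a = (\<tau> - \<sigma>) / 2 ^ n"
  using assms
proof (induction n arbitrary: a b)
  case 0
  then show ?case using interval by simp
next
  case (Suc n)
  obtain a0 b0 where ab0: "bisect n = (a0, b0)" by fastforce
  with Suc.IH have "\<sigma> \<le> a0" "a0 < b0" "b0 \<le> \<tau>" "b0 - a0 = (\<tau> - \<sigma>) / 2 ^ n"
    by auto
  moreover have "(a, b) = ((a0 + b0) / 2, b0) \<or> (a, b) = (a0, (a0 + b0) / 2)"
    using Suc.prems ab0 by (auto split: if_splits)
  moreover have "(b0 - a0) / 2 = (\<tau> - \<sigma>) / 2 ^ Suc n"
    using \<open>b0 - a0 = (\<tau> - \<sigma>) / 2 ^ n\<close> by simp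
  ultimately show ?case
    by auto
qed

lemma bisect_SucE:
  assumes "bisect n = (a, b)"
  obtains "bisect (Suc n) = ((a + b) / 2, b)" "dist (f a) (f ((a + b) / 2)) \<le> w * (b - a) powr \<mu>"
  | "bisect (Suc n) = (a, (a + b) / 2)" "dist (f ((a + b) / 2)) (f b) \<le> w * (b - a) powr \<mu>"
proof -
  have "Delta f a ((a + b) / 2) b \<le> w * (b - a) powr \<mu>"
    using bisect_interval[OF assms] by (intro midpoint) auto
  then show ?thesis
    using that assms by (cases "dist (f a) (f ((a + b) / 2)) \<le> w * (b - a) powr \<mu>") (auto simp: Delta_def)
qed

lemma bisect_less: "fst (bisect n) < snd (bisect n)"
  using bisect_interval[of n "fst (bisect n)" "snd (bisect n)"] by simp

lemma bisect_nested: "fst (bisect n) \<le> fst (bisect (Suc n)) \<and> snd (bisect (Suc n)) \<le> snd (bisect n)"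
proof -
  obtain a b where ab: "bisect n = (a, b)" by fastforce
  then have "a < b" using bisect_interval by blast
  from ab show ?thesis
    by (cases rule: bisect_SucE) (use ab \<open>a < b\<close> in auto)
qed

lemma bisect_endpoint_dist:
  assumes "bisect n = (a, b)"
  shows "dist (f a) (f \<sigma>) \<le> S (\<tau> - \<sigma>) - S (b - a) \<and> dist (f b) (f \<tau>) \<le> S (\<tau> - \<sigma>) - S (b - a)"
  using assms
proof (induction n arbitrary: a b)
  case 0
  then show ?case by simp
next
  case (Suc n)
  obtain a0 b0 where ab0: "bisect n = (a0, b0)" by fastforce
  define m where "m = (a0 + b0) / 2"
  define l where "l = b0 - a0"
  have "0 < l"
    using bisect_interval[OF ab0] unfolding l_def by simp
  then have split: "S l = w * l powr \<mu> + S (l / 2)" and shrink: "S (l / 2) \<le> S l"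
    using dyadic_sum_half[OF exponent_pos, of l] S_mono[of "l / 2" l] by auto
  have halves: "b0 - m = l / 2" "m - a0 = l / 2"
    unfolding m_def l_def by (simp_all add: field_simps)
  have IH: "dist (f a0) (f \<sigma>) \<le> S (\<tau> - \<sigma>) - S l" "dist (f b0) (f \<tau>) \<le> S (\<tau> - \<sigma>) - S l"
    using Suc.IH[OF ab0] unfolding l_def by auto
  from ab0 show ?case
  proof (cases rule: bisect_SucE)
    case 1
    then have "a = m" "b = b0"
      using Suc.prems unfolding m_def by auto
    moreover have "dist (f m) (f \<sigma>) \<le> dist (f a0) (f m) + dist (f a0) (f \<sigma>)"
      by (rule dist_triangle3)
    moreover have "dist (f a0) (f m) \<le> w * l powr \<mu>"
      using 1 unfolding m_def l_def by simp
    ultimately show ?thesis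
      using IH split shrink halves by (simp only:) linarith
  next
    case 2
    then have "a = a0" "b = m"
      using Suc.prems unfolding m_def by auto
    moreover have "dist (f m) (f \<tau>) \<le> dist (f b0) (f m) + dist (f b0) (f \<tau>)"
      by (rule dist_triangle3)
    moreover have "dist (f b0) (f m) \<le> w * l powr \<mu>"
      using 2 unfolding m_def l_def by (simp add: dist_commute)
    ultimately show ?thesis
      using IH split shrink halves by (simp only:) linarith
  qed
qed

lemma bisect_left_dist:
  assumes "bisect n = (a, b)" "\<sigma> \<le> s" "s \<le> a"
  shows "dist (f s) (f \<sigma>) \<le> S (\<tau> - \<sigma>)"
  using assms
proof (induction n arbitrary: a b)
  case 0
  then show ?case using S_nonneg by simp
next
  case (Suc n)
  obtain a0 b0 where ab0: "bisect n = (a0, b0)" by fastforce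
  define m where "m = (a0 + b0) / 2"
  from ab0 show ?case
  proof (cases rule: bisect_SucE)
    case 1
    show ?thesis
    proof (cases "s \<le> a0")
      case True
      then show ?thesis using Suc.IH[OF ab0] Suc.prems by blast
    next
      case False
      have ab: "a = m" "b = b0"
        using 1 Suc.prems unfolding m_def by auto
      have interval0: "\<sigma> \<le> a0" "a0 < b0" "b0 \<le> \<tau>"
        using bisect_interval[OF ab0] by auto
      then have halves: "b0 - m = m - a0" "m - a0 \<le> b0 - a0" "0 \<le> m - a0"
        unfolding m_def by (simp_all add: field_simps)
      have "dist (f s) (f \<sigma>) \<le> (S (\<tau> - \<sigma>) - S (m - a0)) + S (m - a0)"
      proof (rule dist_le_on_interval)
        show "dist (f a0) (f \<sigma>) \<le> S (\<tau> - \<sigma>) - S (m - a0)"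
          using bisect_endpoint_dist[OF ab0] S_mono[OF halves(3,2)] by linarith
        show "dist (f m) (f \<sigma>) \<le> S (\<tau> - \<sigma>) - S (m - a0)"
          using bisect_endpoint_dist[OF 1(1)[folded m_def]] halves(1) by (simp only:)
      qed (use interval0 False Suc.prems ab in \<open>auto simp: m_def\<close>)
      then show ?thesis by simp
    qed
  next
    case 2
    then show ?thesis using Suc.IH[OF ab0] Suc.prems by auto
  qed
qed

lemma bisect_right_dist:
  assumes "bisect n = (a, b)" "b \<le> u" "u \<le> \<tau>"
  shows "dist (f u) (f \<tau>) \<le> S (\<tau> - \<sigma>)"
  using assms
proof (induction n arbitrary: a b)
  case 0
  then show ?case using S_nonneg by simp
next
  case (Suc n)
  obtain a0 b0 where ab0: "bisect n = (a0, b0)" by fastforce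
  define m where "m = (a0 + b0) / 2"
  from ab0 show ?case
  proof (cases rule: bisect_SucE)
    case 1
    then show ?thesis using Suc.IH[OF ab0] Suc.prems by auto
  next
    case 2
    show ?thesis
    proof (cases "b0 \<le> u")
      case True
      then show ?thesis using Suc.IH[OF ab0] Suc.prems by blast
    next
      case False
      have ab: "a = a0" "b = m"
        using 2 Suc.prems unfolding m_def by auto
      have interval0: "\<sigma> \<le> a0" "a0 < b0" "b0 \<le> \<tau>"
        using bisect_interval[OF ab0] by auto
      then have halves: "m - a0 = b0 - m" "b0 - m \<le> b0 - a0" "0 \<le> b0 - m"
        unfolding m_def by (simp_all add: field_simps)
      have "dist (f u) (f \<tau>) \<le> (S (\<tau> - \<sigma>) - S (b0 - m)) + S (b0 - m)"
      proof (rule dist_le_on_interval)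
        show "dist (f b0) (f \<tau>) \<le> S (\<tau> - \<sigma>) - S (b0 - m)"
          using bisect_endpoint_dist[OF ab0] S_mono[OF halves(3,2)] by linarith
        show "dist (f m) (f \<tau>) \<le> S (\<tau> - \<sigma>) - S (b0 - m)"
          using bisect_endpoint_dist[OF 2(1)[folded m_def]] halves(1) by (simp only:)
      qed (use interval0 False Suc.prems ab in \<open>auto simp: m_def\<close>)
      then show ?thesis by simp
    qed
  qed
qed

lemma bisect_limit:
  obtains \<theta> where "\<sigma> \<le> \<theta>" "\<theta> \<le> \<tau>"
    "\<And>s. \<sigma> \<le> s \<Longrightarrow> s < \<theta> \<Longrightarrow> dist (f s) (f \<sigma>) \<le> S (\<tau> - \<sigma>)"
    "\<And>u. \<theta> < u \<Longrightarrow> u \<le> \<tau> \<Longrightarrow> dist (f u) (f \<tau>) \<le> S (\<tau> - \<sigma>)"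
proof -
  define A where "A n = fst (bisect n)" for n
  define B where "B n = snd (bisect n)" for n
  have AB: "bisect n = (A n, B n)" for n
    unfolding A_def B_def by simp
  have "B n - A n = (\<tau> - \<sigma>) / 2 ^ n" for n
    using bisect_interval[OF AB] by blast
  then have "A n - B n = - ((\<tau> - \<sigma>) / 2 ^ n)" for n
    by (metis minus_diff_eq)
  then have "(\<lambda>n. A n - B n) \<longlonglongrightarrow> 0"
    using tendsto_minus[OF LIMSEQ_divide_realpow_zero[of 2 "\<tau> - \<sigma>"]] by simp
  then have "\<exists>\<theta>. ((\<forall>n. A n \<le> \<theta>) \<and> A \<longlonglongrightarrow> \<theta>) \<and> ((\<forall>n. \<theta> \<le> B n) \<and> B \<longlonglongrightarrow> \<theta>)"
    using bisect_nested bisect_less unfolding A_def B_def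
    by (intro nested_sequence_unique) (auto intro: less_imp_le)
  then obtain \<theta> where A: "\<And>n. A n \<le> \<theta>" "A \<longlonglongrightarrow> \<theta>" and B: "\<And>n. \<theta> \<le> B n" "B \<longlonglongrightarrow> \<theta>"
    by blast
  show thesis
  proof (rule that)
    show "\<sigma> \<le> \<theta>" "\<theta> \<le> \<tau>"
      using A(1)[of 0] B(1)[of 0] unfolding A_def B_def by auto
  next
    fix s assume "\<sigma> \<le> s" "s < \<theta>"
    moreover obtain n where "s < A n"
      using order_tendstoD(1)[OF A(2) \<open>s < \<theta>\<close>] by (auto simp: eventually_sequentially)
    ultimately show "dist (f s) (f \<sigma>) \<le> S (\<tau> - \<sigma>)"
      using bisect_left_dist[OF AB[of n], of s] by simp
  next
    fix u assume "\<theta> < u" "u \<le> \<tau>"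
    moreover obtain n where "B n < u"
      using order_tendstoD(2)[OF B(2) \<open>\<theta> < u\<close>] by (auto simp: eventually_sequentially)
    ultimately show "dist (f u) (f \<tau>) \<le> S (\<tau> - \<sigma>)"
      using bisect_right_dist[OF AB[of n], of u] by simp
  qed
qed

lemma Nint_le_dyadic_sum: "Nint f \<sigma> \<tau> \<le> ereal (S (\<tau> - \<sigma>))"
proof -
  obtain \<theta> where \<theta>: "\<sigma> \<le> \<theta>" "\<theta> \<le> \<tau>"
    and left: "\<And>s. \<sigma> \<le> s \<Longrightarrow> s < \<theta> \<Longrightarrow> dist (f s) (f \<sigma>) \<le> S (\<tau> - \<sigma>)"
    and right_open: "\<And>u. \<theta> < u \<Longrightarrow> u \<le> \<tau> \<Longrightarrow> dist (f u) (f \<tau>) \<le> S (\<tau> - \<sigma>)"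
    using bisect_limit by blast
  have right: "dist (f u) (f \<tau>) \<le> S (\<tau> - \<sigma>)" if "\<theta> \<le> u" "u \<le> \<tau>" for u
  proof (cases "u = \<theta> \<and> \<theta> < \<tau>")
    case True
    show ?thesis
    proof (rule dist_le_of_right_approach)
      show "continuous (at_right u) f"
        using True \<theta> by (intro right_cont) auto
      show "\<exists>y. u < y \<and> y < u + d \<and> dist (f y) (f \<tau>) \<le> S (\<tau> - \<sigma>)" if "0 < d" for d
        using True that by (intro exI[of _ "min \<tau> (u + d / 2)"] conjI right_open) auto
    qed
  next
    case False
    with that have "\<theta> < u \<or> u = \<tau>"
      by auto
    then show ?thesis
      using right_open[OF _ that(2)] S_nonneg by auto
  qed
  show ?thesis
  proof (cases "\<sigma> < \<theta>")
    case True
    with \<theta> left right show ?thesis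
      by (intro Nint_le[of \<sigma> \<theta>]) (auto simp: dist_commute)
  next
    case False
    with \<theta> interval show ?thesis
      by (intro Nint_le_right_cont right_cont S_nonneg right) auto
  qed
qed

end

lemma Delta_midpoint_le_at_left_end:
  fixes f :: "real \<Rightarrow> 'a::metric_space"
  assumes "a < b" "continuous (at_right a) f" "continuous (at_right ((a + b) / 2)) f"
    and inner: "\<And>a'. a < a' \<Longrightarrow> a' < b \<Longrightarrow> Delta f a' ((a' + b) / 2) b \<le> w * (b - a') powr \<mu>"
  shows "Delta f a ((a + b) / 2) b \<le> w * (b - a) powr \<mu>"
proof (rule tendsto_le[of "at_right a"])
  have "filterlim (\<lambda>s. (s + b) / 2) (at_right ((a + b) / 2)) (at_right a)"
    by (rule tendsto_imp_filterlim_at_right)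
      (auto intro!: tendsto_eq_intros eventually_at_rightI[of a b] simp: assms(1))
  then have "((\<lambda>s. f ((s + b) / 2)) \<longlongrightarrow> f ((a + b) / 2)) (at_right a)"
    using assms(3) by (auto simp: continuous_within intro: filterlim_compose)
  then show "((\<lambda>s. Delta f s ((s + b) / 2) b) \<longlongrightarrow> Delta f a ((a + b) / 2) b) (at_right a)"
    using assms(2) unfolding Delta_def continuous_within by (intro tendsto_min tendsto_dist tendsto_const)
  show "((\<lambda>s. w * (b - s) powr \<mu>) \<longlongrightarrow> w * (b - a) powr \<mu>) (at_right a)"
    using assms(1) by (auto intro!: tendsto_eq_intros)
  show "\<forall>\<^sub>F s in at_right a. Delta f s ((s + b) / 2) b \<le> w * (b - s) powr \<mu>"
    using assms(1) by (auto intro!: inner eventually_at_rightI[of a b])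
qed simp

lemma midpoint_le_of_wedge_semi_le:
  fixes f :: "real \<Rightarrow> 'a::metric_space"
  assumes right_cont: "\<And>t. 0 \<le> t \<Longrightarrow> t < 1 \<Longrightarrow> continuous (at_right t) f"
    and wedge: "wedge_semi \<mu> f \<le> ereal w"
    and ab: "0 \<le> a" "a < b" "b \<le> 1"
  shows "Delta f a ((a + b) / 2) b \<le> w * (b - a) powr \<mu>"
proof -
  have inner: "Delta f a' ((a' + b') / 2) b' \<le> w * (b' - a') powr \<mu>"
    if "0 < a'" "a' < b'" "b' \<le> 1" for a' b'
  proof -
    have "ereal (Delta f a' ((a' + b') / 2) b' / (b' - a') powr \<mu>) \<le> wedge_semi \<mu> f"
      unfolding wedge_semi_def using that by (intro SUP_upper2[of "(a', b')"]) auto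
    then have "ereal (Delta f a' ((a' + b') / 2) b' / (b' - a') powr \<mu>) \<le> ereal w"
      using wedge by (rule order_trans)
    then show ?thesis
      using that by (simp add: pos_divide_le_eq)
  qed
  show ?thesis
  proof (cases "a = 0")
    case True
    show ?thesis
    proof (rule Delta_midpoint_le_at_left_end)
      show "continuous (at_right a) f" "continuous (at_right ((a + b) / 2)) f"
        using ab by (auto intro!: right_cont)
      show "Delta f a' ((a' + b) / 2) b \<le> w * (b - a') powr \<mu>" if "a < a'" "a' < b" for a'
        using that ab True by (intro inner) auto
    qed (use ab in auto)
  next
    case False
    with ab show ?thesis
      by (intro inner) auto
  qed
qed

lemma Neta_le_dyadic_sum:
  fixes f :: "real \<Rightarrow> 'a::metric_space"
  assumes "0 < \<mu>" and right_cont: "\<And>t. 0 \<le> t \<Longrightarrow> t < 1 \<Longrightarrow> continuous (at_right t) f"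
    and wedge: "wedge_semi \<mu> f \<le> ereal w"
  shows "Neta f \<eta> \<le> ereal (dyadic_sum \<mu> w \<eta>)"
  unfolding Neta_def
proof (rule SUP_least, clarify)
  fix \<sigma> \<tau> :: real assume \<sigma>\<tau>: "0 \<le> \<sigma>" "\<sigma> < \<tau>" "\<tau> \<le> 1" "\<tau> - \<sigma> \<le> \<eta>"
  interpret midpoint_bounded f \<mu> w \<sigma> \<tau>
  proof
    show "continuous (at_right t) f" if "\<sigma> \<le> t" "t < \<tau>" for t
      using that \<sigma>\<tau> by (intro right_cont) auto
    show "Delta f a ((a + b) / 2) b \<le> w * (b - a) powr \<mu>" if "\<sigma> \<le> a" "a < b" "b \<le> \<tau>" for a b
      using that \<sigma>\<tau> by (intro midpoint_le_of_wedge_semi_le[OF right_cont wedge]) auto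
  qed (use \<sigma>\<tau> assms(1) in auto)
  have "Nint f \<sigma> \<tau> \<le> ereal (S (\<tau> - \<sigma>))"
    by (rule Nint_le_dyadic_sum)
  also have "\<dots> \<le> ereal (S \<eta>)"
    using S_mono[of "\<tau> - \<sigma>" \<eta>] \<sigma>\<tau> by simp
  finally show "Nint f \<sigma> \<tau> \<le> ereal (dyadic_sum \<mu> w \<eta>)" .
qed

lemma tilde_semi_le_wedge_semi:
  fixes f :: "real \<Rightarrow> 'a::metric_space"
  assumes "0 < \<mu>" and "\<And>t. 0 \<le> t \<Longrightarrow> t < 1 \<Longrightarrow> continuous (at_right t) f"
  shows "tilde_semi \<mu> f \<le> ereal (1 / (1 - 2 powr (- \<mu>))) * wedge_semi \<mu> f"
proof (cases "wedge_semi \<mu> f")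
  case PInf
  then show ?thesis
    using two_powr_neg_less_one[OF assms(1)] assms(1) by simp
next
  case MInf
  then show ?thesis
    using wedge_semi_nonneg[of \<mu> f] by simp
next
  case (real w)
  have "tilde_semi \<mu> f \<le> ereal (w / (1 - 2 powr (- \<mu>)))"
    unfolding tilde_semi_def
  proof (rule SUP_least)
    fix \<eta> :: real assume "\<eta> \<in> {0<..}"
    then have "0 < \<eta> powr \<mu>" by simp
    then have "Neta f \<eta> / ereal (\<eta> powr \<mu>) \<le> ereal (dyadic_sum \<mu> w \<eta>) / ereal (\<eta> powr \<mu>)"
      using Neta_le_dyadic_sum[OF assms] real by (intro ereal_divide_right_mono) auto
    also have "\<dots> = ereal (w / (1 - 2 powr (- \<mu>)))"
      using \<open>0 < \<eta> powr \<mu>\<close> by (simp add: dyadic_sum_def)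
    finally show "Neta f \<eta> / ereal (\<eta> powr \<mu>) \<le> ereal (w / (1 - 2 powr (- \<mu>)))" .
  qed
  then show ?thesis
    using real by simp
qed

theorem lemma2:
  fixes f :: "real \<Rightarrow> 'a::polish_space" and \<mu> :: real
  assumes "0 < \<mu>" and "\<mu> < 1" and "f \<in> holder_D \<mu>"
  shows "wedge_semi \<mu> f \<le> holder_semi \<mu> f
       \<and> holder_semi \<mu> f \<le> 2 * tilde_semi \<mu> f
       \<and> 2 * tilde_semi \<mu> f \<le> ereal (2 / (1 - 2 powr (- \<mu>))) * wedge_semi \<mu> f"
proof (intro conjI)
  show "wedge_semi \<mu> f \<le> holder_semi \<mu> f"
    by (rule wedge_semi_le_holder_semi)
  have "0 \<le> tilde_semi \<mu> f"
    using holder_semi_nonneg holder_semi_le_tilde_semi order_trans by blast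
  then have "tilde_semi \<mu> f \<le> 2 * tilde_semi \<mu> f"
    by (cases "tilde_semi \<mu> f") auto
  then show "holder_semi \<mu> f \<le> 2 * tilde_semi \<mu> f"
    using holder_semi_le_tilde_semi order_trans by blast
  have "\<And>t. 0 \<le> t \<Longrightarrow> t < 1 \<Longrightarrow> continuous (at_right t) f"
    using assms(3) by (simp add: holder_D_def cadlag_def)
  then have "2 * tilde_semi \<mu> f \<le> 2 * (ereal (1 / (1 - 2 powr (- \<mu>))) * wedge_semi \<mu> f)"
    using tilde_semi_le_wedge_semi[OF assms(1)] by (intro ereal_mult_left_mono) auto
  then show "2 * tilde_semi \<mu> f \<le> ereal (2 / (1 - 2 powr (- \<mu>))) * wedge_semi \<mu> f"
    by (simp add: mult.assoc[symmetric])
qed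

end
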